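(* Let $\ell^\infty\neq0$ be real. For $k\in\{1,2\}$ let $\Sigma^{(k)}$ be disjoint finite site sets, each consisting of real sites, complex sites and their conjugates, with multiplicities $m_\alpha\ge1$, levels $\ell^\alpha_{[p]}$ ($0\le p\le m_\alpha-1$, $\ell^\alpha_{[m_\alpha-1]}\ne0$) real for real sites and with $m_{\bar\alpha}=m_\alpha$, $\ell^{\bar\alpha}_{[p]}=\overline{\ell^\alpha_{[p]}}$ for conjugate sites, and pairwise distinct positions $z_\alpha$ real for real sites and $z_{\bar\alpha}=\overline{z_\alpha}$. Let $\chi_k(z)=\sum_{\alpha\in\Sigma^{(k)}}\sum_p\frac{\ell^\alpha_{[p]}}{(z-z_\alpha)^{p+1}}$, $\varphi_k=\chi_k-\ell^\infty$, $M_k=\sum_{\alpha\in\Sigma^{(k)}}m_\alpha$, $M=M_1+M_2$, with simple zeros $\zeta^{(1)}_i$ ($i\le M_1$) of $\varphi_1$ and $\zeta^{(2)}_i$ ($M_1<i\le M$) of $\varphi_2$. For real $\gamma\neq0$ let $\varphi_{1\otimes2,\gamma}(z)=\chi_1(z)+\chi_2(z-\gamma^{-1})-\ell^\infty$, with zeros $\zeta_i(\gamma)$ labelled for small $\gamma$ so that $\zeta_i(\gamma)=\zeta^{(1)}_i+O(\gamma)$ ($i\le M_1$) and $\zeta_i(\gamma)=\gamma^{-1}+\zeta^{(2)}_i+O(\gamma)$ ($i>M_1$). Fix $i\in\{1,\dots,M\}$, let $k=1$ if $i\le M_1$ and $k=2$ otherwise, and suppose $\zeta^{(k)}_i$ is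 real. Then for $\gamma$ small enough, $\zeta_i(\gamma)$ is real, and $\varphi_{1\otimes2,\gamma}'(\zeta_i(\gamma))$ and $\varphi_k'(\zeta^{(k)}_i)$ have the same sign. *)

theory Defs
  imports "HOL-Analysis.Analysis" "HOL-Library.Landau_Symbols"
begin

text \<open>A site configuration: finite site set S, a conjugation map cj on sites
(cj a = a for real sites), positions pos, multiplicities m and levels lev a p.\<close>
definition site_config ::
  "'s set \<Rightarrow> ('s \<Rightarrow> 's) \<Rightarrow> ('s \<Rightarrow> complex) \<Rightarrow> ('s \<Rightarrow> nat) \<Rightarrow> ('s \<Rightarrow> nat \<Rightarrow> complex) \<Rightarrow> bool"
where
  "site_config S cj pos m lev \<longleftrightarrow>
     finite S \<and>
     (\<forall>a\<in>S. cj a \<in> S \<and> cj (cj a) = a) \<and>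
     (\<forall>a\<in>S. m a \<ge> 1 \<and> lev a (m a - 1) \<noteq> 0) \<and>
     (\<forall>a\<in>S. cj a = a \<longrightarrow> pos a \<in> \<real> \<and> (\<forall>p<m a. lev a p \<in> \<real>)) \<and>
     (\<forall>a\<in>S. m (cj a) = m a \<and> pos (cj a) = cnj (pos a) \<and>
              (\<forall>p<m a. lev (cj a) p = cnj (lev a p))) \<and>
     inj_on pos S"

definition chi ::
  "'s set \<Rightarrow> ('s \<Rightarrow> complex) \<Rightarrow> ('s \<Rightarrow> nat) \<Rightarrow> ('s \<Rightarrow> nat \<Rightarrow> complex) \<Rightarrow> complex \<Rightarrow> complex"
where
  "chi S pos m lev z = (\<Sum>a\<in>S. \<Sum>p<m a. lev a p / (z - pos a) ^ (p + 1))"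

end

theory Submission
  imports Defs
begin

text \<open>Write the glued function near the reference zero \<zeta> as \<open>\<chi>\<^sub>A(z) + \<chi>\<^sub>B(z + t) - \<ell>\<^sup>\<infinity>\<close>
  with a real shift \<open>t\<close> of size \<open>1/\<gamma>\<close>. On a fixed disc around \<zeta> the second summand stays far
  from its poles, so its derivative is negligible and the glued function has derivative close to
  the nonzero constant \<open>c = \<chi>\<^sub>A'(\<zeta>)\<close>; hence it is injective on the disc. It commutes with
  conjugation and the disc is symmetric about the real axis, so a zero in the disc coincides with
  its mirror image and is real. Its derivative is then real and tends to \<open>c\<close>, so eventually it
  has the sign of \<open>c\<close>.\<close>

lemma has_field_derivative_pole_term:
  fixes b c z :: "'a::real_normed_field"
  assumes "z \<noteq> b"
  shows "((\<lambda>w. c / (w - b) ^ (p + 1)) has_field_derivative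
           - (of_nat (p + 1) * c) / (z - b) ^ (p + 2)) (at z)"
proof -
  have "((\<lambda>w. (w - b) ^ (p + 1)) has_field_derivative of_nat (p + 1) * (z - b) ^ p) (at z)"
    by (rule DERIV_power[OF DERIV_diff[OF DERIV_ident DERIV_const], THEN DERIV_cong]) simp
  moreover have "(z - b) ^ (p + 1) * (z - b) ^ (p + 1) = (z - b) ^ (p + 2) * (z - b) ^ p"
    by (simp flip: power_add)
  ultimately show ?thesis
    using assms by (auto intro: DERIV_divide[OF DERIV_const, THEN DERIV_cong])
qed

lemma tendsto_pole_term_at_infinity:
  fixes b c :: "'a::real_normed_field"
  shows "((\<lambda>w. c / (w - b) ^ Suc n) \<longlongrightarrow> 0) at_infinity"
proof (rule tendsto_divide_0[OF tendsto_const])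
  have "filterlim (\<lambda>w. w + - b) at_infinity at_infinity"
    by (rule tendsto_add_filterlim_at_infinity'[OF filterlim_ident tendsto_const])
  then have "filterlim (\<lambda>w. w - b) at_infinity at_infinity"
    by simp
  from filterlim_compose[OF filterlim_power_at_infinity[of "Suc n"] this]
  show "filterlim (\<lambda>w. (w - b) ^ Suc n) at_infinity at_infinity"
    by simp
qed

lemma eventually_notin_bounded_at_infinity:
  assumes "bounded A"
  shows "eventually (\<lambda>w. w \<notin> A) at_infinity"
proof -
  obtain B where "\<forall>x\<in>A. norm x \<le> B"
    using assms bounded_iff by blast
  then show ?thesis
    unfolding eventually_at_infinity by (intro exI[of _ "B + 1"]) force
qed

lemma bigo_tendsto_zero:
  fixes f :: "'a \<Rightarrow> 'b::real_normed_field"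
  assumes "f \<in> O[F](g)" "(g \<longlongrightarrow> 0) F"
  shows "(f \<longlongrightarrow> 0) F"
proof -
  obtain c where "eventually (\<lambda>x. norm (f x) \<le> c * norm (g x)) F"
    using landau_o.bigE[OF assms(1)] by blast
  moreover have "((\<lambda>x. c * norm (g x)) \<longlongrightarrow> 0) F"
    using tendsto_mult_right_zero[OF tendsto_norm_zero[OF assms(2)]] .
  ultimately show ?thesis
    by (rule Lim_null_comparison)
qed

lemma eventually_sgn_eq_if_tendsto:
  fixes f :: "'a \<Rightarrow> real"
  assumes "(f \<longlongrightarrow> l) F" "l \<noteq> 0"
  shows "eventually (\<lambda>x. sgn (f x) = sgn l) F"
proof (cases "l > 0")
  case True
  then show ?thesis
    using order_tendstoD(1)[OF assms(1), of 0] by (auto elim!: eventually_mono)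
next
  case False
  then show ?thesis
    using assms(2) order_tendstoD(2)[OF assms(1), of 0] by (auto elim!: eventually_mono)
qed

lemma inj_on_if_deriv_near_const:
  fixes F :: "'a::real_normed_field \<Rightarrow> 'a"
  assumes "convex S"
    and F': "\<And>z. z \<in> S \<Longrightarrow> (F has_field_derivative F' z) (at z within S)"
    and near: "\<And>z. z \<in> S \<Longrightarrow> norm (F' z - c) \<le> B" and "B < norm c"
  shows "inj_on F S"
proof (rule inj_onI)
  fix x y assume "x \<in> S" "y \<in> S" "F x = F y"
  have "norm ((F x - c * x) - (F y - c * y)) \<le> B * norm (x - y)"
    using \<open>convex S\<close> _ near \<open>x \<in> S\<close> \<open>y \<in> S\<close>
    by (rule field_differentiable_bound) (auto intro!: derivative_eq_intros F')
  also have "norm ((F x - c * x) - (F y - c * y)) = norm c * norm (x - y)"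
    using \<open>F x = F y\<close> by (simp add: norm_mult flip: right_diff_distrib norm_minus_commute)
  finally show "x = y"
    using \<open>B < norm c\<close> by (metis mult_le_cancel_right not_le eq_iff_diff_eq_0 norm_le_zero_iff)
qed

lemma real_if_inj_on_cnj_symmetric:
  assumes "inj_on F S" "z \<in> S" "cnj z \<in> S"
    and "F (cnj z) = cnj (F z)" "F z \<in> \<real>"
  shows "z \<in> \<real>"
  using inj_onD[OF assms(1) _ assms(3,2)] assms(4,5) by (simp add: Reals_cnj_iff)

definition chi_deriv ::
  "'s set \<Rightarrow> ('s \<Rightarrow> complex) \<Rightarrow> ('s \<Rightarrow> nat) \<Rightarrow> ('s \<Rightarrow> nat \<Rightarrow> complex) \<Rightarrow> complex \<Rightarrow> complex"
where
  "chi_deriv S pos m lev z = (\<Sum>a\<in>S. \<Sum>p<m a. - (of_nat (p + 1) * lev a p) / (z - pos a) ^ (p + 2))"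

lemma has_field_derivative_chi:
  assumes "finite S" "z \<notin> pos ` S"
  shows "(chi S pos m lev has_field_derivative chi_deriv S pos m lev z) (at z)"
  unfolding chi_def[abs_def] chi_deriv_def
  using assms by (intro DERIV_sum has_field_derivative_pole_term) auto

lemma isCont_chi_deriv:
  assumes "z \<notin> pos ` S"
  shows "isCont (chi_deriv S pos m lev) z"
  unfolding chi_deriv_def[abs_def] using assms by (intro continuous_intros) auto

lemma chi_deriv_tendsto_zero_at_infinity: "(chi_deriv S pos m lev \<longlongrightarrow> 0) at_infinity"
proof -
  have "((\<lambda>w. \<Sum>a\<in>S. \<Sum>p<m a. - (of_nat (p + 1) * lev a p) / (w - pos a) ^ Suc (p + 1))
          \<longlongrightarrow> (\<Sum>a\<in>S. \<Sum>p<m a. 0)) at_infinity"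
    by (intro tendsto_sum tendsto_pole_term_at_infinity)
  then show ?thesis
    by (simp add: chi_deriv_def[abs_def])
qed

lemma deriv_chi_minus_const:
  assumes "finite S" "z \<notin> pos ` S"
  shows "deriv (\<lambda>z. chi S pos m lev z - L) z = chi_deriv S pos m lev z"
  using DERIV_diff[OF has_field_derivative_chi[OF assms] DERIV_const] by (simp add: DERIV_imp_deriv)

lemma has_field_derivative_chi_sum_shift:
  assumes "finite S1" "finite S2" "z \<notin> pos1 ` S1" "z + t \<notin> pos2 ` S2"
  shows "((\<lambda>z. chi S1 pos1 m1 lev1 z + chi S2 pos2 m2 lev2 (z + t)) has_field_derivative
           chi_deriv S1 pos1 m1 lev1 z + chi_deriv S2 pos2 m2 lev2 (z + t)) (at z)"
  using DERIV_add[OF has_field_derivative_chi[OF assms(1,3)]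
      has_field_derivative_chi[OF assms(2,4), unfolded DERIV_shift]] .

lemma chi_deriv_near:
  assumes "finite S" "\<zeta> \<notin> pos ` S" "e > 0"
  obtains r where "r > 0"
    "\<And>z. z \<in> ball \<zeta> r \<Longrightarrow> z \<notin> pos ` S \<and> norm (chi_deriv S pos m lev z - chi_deriv S pos m lev \<zeta>) < e"
proof -
  have "open (- pos ` S)"
    using assms(1) by (intro open_Compl finite_imp_closed) simp
  then have "eventually (\<lambda>z. z \<notin> pos ` S) (nhds \<zeta>)"
    using eventually_nhds_in_open[of "- pos ` S" \<zeta>] assms(2) by simp
  moreover have "eventually (\<lambda>z. dist (chi_deriv S pos m lev z) (chi_deriv S pos m lev \<zeta>) < e) (nhds \<zeta>)"
    using isCont_chi_deriv[OF assms(2)] assms(3)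
    unfolding continuous_at tendsto_at_iff_tendsto_nhds by (rule tendstoD)
  ultimately have "eventually (\<lambda>z. z \<notin> pos ` S \<and>
      dist (chi_deriv S pos m lev z) (chi_deriv S pos m lev \<zeta>) < e) (nhds \<zeta>)"
    by (rule eventually_conj)
  then obtain r where "r > 0" and r: "\<And>z. dist z \<zeta> < r \<Longrightarrow>
      z \<notin> pos ` S \<and> dist (chi_deriv S pos m lev z) (chi_deriv S pos m lev \<zeta>) < e"
    unfolding eventually_nhds_metric by metis
  then show ?thesis
    using that[of r] r by (simp add: dist_norm norm_minus_commute)
qed

lemma chi_deriv_far:
  assumes "finite S" "e > 0"
  obtains R where "\<And>w. R \<le> norm w \<Longrightarrow> w \<notin> pos ` S \<and> norm (chi_deriv S pos m lev w) < e"
proof -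
  have "eventually (\<lambda>w. w \<notin> pos ` S) at_infinity"
    using assms(1) by (intro eventually_notin_bounded_at_infinity finite_imp_bounded) simp
  moreover have "eventually (\<lambda>w. norm (chi_deriv S pos m lev w) < e) at_infinity"
    using chi_deriv_tendsto_zero_at_infinity assms(2) unfolding tendsto_iff by force
  ultimately have "eventually (\<lambda>w. w \<notin> pos ` S \<and> norm (chi_deriv S pos m lev w) < e) at_infinity"
    by (rule eventually_conj)
  then show ?thesis
    using that unfolding eventually_at_infinity by metis
qed

lemma bij_betw_site_conj:
  assumes "site_config S cj pos m lev"
  shows "bij_betw cj S S"
  using assms unfolding site_config_def by (intro bij_betw_byWitness[where f'=cj]) auto

lemma site_sum_cnj:
  assumes cfg: "site_config S cj pos m lev"
    and f: "\<And>p x w. f p (cnj x) (cnj w) = cnj (f p x w)"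
  shows "(\<Sum>a\<in>S. \<Sum>p<m a. f p (lev a p) (cnj z - pos a))
           = cnj (\<Sum>a\<in>S. \<Sum>p<m a. f p (lev a p) (z - pos a))"
proof -
  have "(\<Sum>a\<in>S. \<Sum>p<m a. f p (lev a p) (cnj z - pos a))
          = (\<Sum>a\<in>S. \<Sum>p<m (cj a). f p (lev (cj a) p) (cnj z - pos (cj a)))"
    by (rule sum.reindex_bij_betw[OF bij_betw_site_conj[OF cfg],
          where g="\<lambda>a. \<Sum>p<m a. f p (lev a p) (cnj z - pos a)", symmetric])
  also have "\<dots> = (\<Sum>a\<in>S. \<Sum>p<m a. cnj (f p (lev a p) (z - pos a)))"
  proof (rule sum.cong[OF refl])
    fix a assume "a \<in> S"
    with cfg have "m (cj a) = m a" "pos (cj a) = cnj (pos a)"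
      and "\<And>p. p < m a \<Longrightarrow> lev (cj a) p = cnj (lev a p)"
      unfolding site_config_def by auto
    moreover have "f p (cnj (lev a p)) (cnj z - cnj (pos a)) = cnj (f p (lev a p) (z - pos a))" for p
      using f[of p "lev a p" "z - pos a"] by simp
    ultimately show "(\<Sum>p<m (cj a). f p (lev (cj a) p) (cnj z - pos (cj a)))
        = (\<Sum>p<m a. cnj (f p (lev a p) (z - pos a)))"
      by (intro sum.cong) auto
  qed
  also have "\<dots> = cnj (\<Sum>a\<in>S. \<Sum>p<m a. f p (lev a p) (z - pos a))"
    by (simp only: cnj_sum)
  finally show ?thesis .
qed

lemma chi_cnj:
  assumes "site_config S cj pos m lev"
  shows "chi S pos m lev (cnj z) = cnj (chi S pos m lev z)"
  unfolding chi_def by (rule site_sum_cnj[OF assms, where f="\<lambda>p x w. x / w ^ (p + 1)"]) simp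

lemma chi_deriv_cnj:
  assumes "site_config S cj pos m lev"
  shows "chi_deriv S pos m lev (cnj z) = cnj (chi_deriv S pos m lev z)"
  unfolding chi_deriv_def
  by (rule site_sum_cnj[OF assms, where f="\<lambda>p x w. - (of_nat (p + 1) * x) / w ^ (p + 2)"]) simp

lemma chi_deriv_real:
  assumes "site_config S cj pos m lev" "z \<in> \<real>"
  shows "chi_deriv S pos m lev z \<in> \<real>"
  using chi_deriv_cnj[OF assms(1), of z] assms(2) by (simp add: Reals_cnj_iff)

lemma inj_on_shifted_chi_sum:
  assumes "finite SA" "finite SB" "convex D"
    and poles: "\<And>z. z \<in> D \<Longrightarrow> z \<notin> posA ` SA \<and> z + t \<notin> posB ` SB"
    and near: "\<And>z. z \<in> D \<Longrightarrow>
      norm (chi_deriv SA posA mA levA z - c) + norm (chi_deriv SB posB mB levB (z + t)) \<le> B"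
    and "B < norm c"
  shows "inj_on (\<lambda>z. chi SA posA mA levA z + chi SB posB mB levB (z + t)) D"
proof (rule inj_on_if_deriv_near_const[OF \<open>convex D\<close> _ _ \<open>B < norm c\<close>])
  fix z assume "z \<in> D"
  show "((\<lambda>z. chi SA posA mA levA z + chi SB posB mB levB (z + t)) has_field_derivative
      chi_deriv SA posA mA levA z + chi_deriv SB posB mB levB (z + t)) (at z within D)"
    using assms(1,2) poles[OF \<open>z \<in> D\<close>]
    by (intro has_field_derivative_chi_sum_shift[THEN has_field_derivative_at_within]) auto
  show "norm (chi_deriv SA posA mA levA z + chi_deriv SB posB mB levB (z + t) - c) \<le> B"
    using near[OF \<open>z \<in> D\<close>]
      norm_triangle_ineq[of "chi_deriv SA posA mA levA z - c" "chi_deriv SB posB mB levB (z + t)"]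
    by (simp add: algebra_simps)
qed

lemma shifted_chi_sum_cnj:
  assumes "site_config SA cjA posA mA levA" "site_config SB cjB posB mB levB" "t \<in> \<real>"
  shows "chi SA posA mA levA (cnj z) + chi SB posB mB levB (cnj z + t)
           = cnj (chi SA posA mA levA z + chi SB posB mB levB (z + t))"
proof -
  have "cnj t = t"
    using assms(3) Reals_cnj_iff by blast
  then show ?thesis
    using chi_cnj[OF assms(1), of z] chi_cnj[OF assms(2), of "z + t"] by simp
qed

lemma shifted_chi_sum_zeros_real:
  assumes cfgA: "site_config SA cjA posA mA levA" and cfgB: "site_config SB cjB posB mB levB"
    and \<zeta>: "\<zeta> \<notin> posA ` SA" "\<zeta> \<in> \<real>" and c: "chi_deriv SA posA mA levA \<zeta> \<noteq> 0"
  obtains r R where "r > 0"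
    "\<And>z t. z \<in> ball \<zeta> r \<Longrightarrow> t \<in> \<real> \<Longrightarrow> R \<le> norm t \<Longrightarrow>
       chi SA posA mA levA z + chi SB posB mB levB (z + t) \<in> \<real> \<Longrightarrow> z \<in> \<real>"
proof -
  define c where "c = chi_deriv SA posA mA levA \<zeta>"
  have finA: "finite SA" and finB: "finite SB"
    using cfgA cfgB by (simp_all add: site_config_def)
  have e: "norm c / 4 > 0"
    using c by (simp add: c_def)
  obtain r where "r > 0" and near: "\<And>z. z \<in> ball \<zeta> r \<Longrightarrow>
      z \<notin> posA ` SA \<and> norm (chi_deriv SA posA mA levA z - c) < norm c / 4"
    using chi_deriv_near[OF finA \<zeta>(1) e] unfolding c_def by blast
  obtain R where far: "\<And>w. R \<le> norm w \<Longrightarrow>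
      w \<notin> posB ` SB \<and> norm (chi_deriv SB posB mB levB w) < norm c / 4"
    using chi_deriv_far[OF finB e] by blast
  have "z \<in> \<real>" if z: "z \<in> ball \<zeta> r" and t: "t \<in> \<real>" "R + norm \<zeta> + r \<le> norm t"
    and real: "chi SA posA mA levA z + chi SB posB mB levB (z + t) \<in> \<real>" for z t
  proof -
    have far_shifted: "w + t \<notin> posB ` SB \<and> norm (chi_deriv SB posB mB levB (w + t)) < norm c / 4"
      if "w \<in> ball \<zeta> r" for w
    proof (rule far)
      have "norm w \<le> norm \<zeta> + r"
        using that norm_triangle_ineq2[of w \<zeta>] by (simp add: dist_norm norm_minus_commute)
      then show "R \<le> norm (w + t)"
        using t(2) norm_triangle_ineq2[of t "- w"] by (simp add: add.commute)
    qed
    have "inj_on (\<lambda>z. chi SA posA mA levA z + chi SB posB mB levB (z + t)) (ball \<zeta> r)"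
      using near far_shifted e
      by (intro inj_on_shifted_chi_sum[OF finA finB convex_ball, where B="norm c / 2" and c=c]) force+
    moreover have "cnj z \<in> ball \<zeta> r"
      using z \<zeta>(2) by (metis Reals_cnj_iff complex_cnj_diff complex_mod_cnj dist_norm mem_ball)
    ultimately show ?thesis
      using real_if_inj_on_cnj_symmetric z shifted_chi_sum_cnj[OF cfgA cfgB t(1)] real by blast
  qed
  then show ?thesis
    using that[OF \<open>r > 0\<close>] by blast
qed

lemma shifted_chi_sum_zero_deriv_sign:
  assumes cfgA: "site_config SA cjA posA mA levA" and cfgB: "site_config SB cjB posB mB levB"
    and \<zeta>: "\<zeta> \<notin> posA ` SA" "\<zeta> \<in> \<real>" and c: "chi_deriv SA posA mA levA \<zeta> \<noteq> 0"
    and zero: "eventually (\<lambda>x. chi SA posA mA levA (W x) + chi SB posB mB levB (W x + s x) \<in> \<real>) F"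
    and W: "(W \<longlongrightarrow> \<zeta>) F"
    and s: "\<And>x. s x \<in> \<real>" "filterlim s at_infinity F"
  shows "eventually (\<lambda>x. W x \<in> \<real> \<and>
           chi_deriv SA posA mA levA (W x) + chi_deriv SB posB mB levB (W x + s x) \<in> \<real> \<and>
           sgn (Re (chi_deriv SA posA mA levA (W x) + chi_deriv SB posB mB levB (W x + s x)))
             = sgn (Re (chi_deriv SA posA mA levA \<zeta>))) F"
proof -
  obtain r R where "r > 0" and real: "\<And>z t. z \<in> ball \<zeta> r \<Longrightarrow> t \<in> \<real> \<Longrightarrow> R \<le> norm t \<Longrightarrow>
      chi SA posA mA levA z + chi SB posB mB levB (z + t) \<in> \<real> \<Longrightarrow> z \<in> \<real>"
    using shifted_chi_sum_zeros_real[OF cfgA cfgB \<zeta> c] by blast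
  have "eventually (\<lambda>x. W x \<in> ball \<zeta> r) F"
    using tendstoD[OF W \<open>r > 0\<close>] by (simp add: dist_commute)
  moreover have "eventually (\<lambda>x. R \<le> norm (s x)) F"
    using s(2) unfolding filterlim_at_infinity_conv_norm_at_top filterlim_at_top by blast
  ultimately have W_real: "eventually (\<lambda>x. W x \<in> \<real>) F"
    using zero by eventually_elim (use real s(1) in blast)
  have "((\<lambda>x. chi_deriv SA posA mA levA (W x) + chi_deriv SB posB mB levB (W x + s x))
          \<longlongrightarrow> chi_deriv SA posA mA levA \<zeta> + 0) F"
    by (intro tendsto_add isCont_tendsto_compose[OF isCont_chi_deriv[OF \<zeta>(1)] W]
        filterlim_compose[OF chi_deriv_tendsto_zero_at_infinity
          tendsto_add_filterlim_at_infinity[OF W s(2)]])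
  moreover have "Re (chi_deriv SA posA mA levA \<zeta>) \<noteq> 0"
    using c chi_deriv_real[OF cfgA \<zeta>(2)] by (metis Reals_cases Re_complex_of_real of_real_0)
  ultimately have "eventually (\<lambda>x.
      sgn (Re (chi_deriv SA posA mA levA (W x) + chi_deriv SB posB mB levB (W x + s x)))
        = sgn (Re (chi_deriv SA posA mA levA \<zeta>))) F"
    by (intro eventually_sgn_eq_if_tendsto tendsto_Re) simp_all
  with W_real show ?thesis
    by eventually_elim (use chi_deriv_real[OF cfgA] chi_deriv_real[OF cfgB] s(1) in auto)
qed

lemma glued_zero_real_deriv_sign:
  assumes cfgA: "site_config SA cjA posA mA levA" and cfgB: "site_config SB cjB posB mB levB"
    and "L \<in> \<real>"
    and Phi: "\<And>x z. Phi x z = chi SA posA mA levA (z - a x) + chi SB posB mB levB (z - a x + s x) - L"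
    and \<zeta>: "\<zeta> \<notin> posA ` SA" "\<zeta> \<in> \<real>"
    and simple: "deriv (\<lambda>z. chi SA posA mA levA z - L) \<zeta> \<noteq> 0"
    and zero: "eventually (\<lambda>x. Z x - a x \<notin> posA ` SA \<and> Z x - a x + s x \<notin> posB ` SB \<and>
      Phi x (Z x) = 0) F"
    and lim: "((\<lambda>x. Z x - a x) \<longlongrightarrow> \<zeta>) F"
    and a: "\<And>x. a x \<in> \<real>" and s: "\<And>x. s x \<in> \<real>" "filterlim s at_infinity F"
  shows "eventually (\<lambda>x. Z x \<in> \<real> \<and> deriv (Phi x) (Z x) \<in> \<real> \<and>
           sgn (Re (deriv (Phi x) (Z x))) = sgn (Re (deriv (\<lambda>z. chi SA posA mA levA z - L) \<zeta>))) F"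
proof -
  have finA: "finite SA" and finB: "finite SB"
    using cfgA cfgB by (simp_all add: site_config_def)
  have deriv_Phi: "deriv (Phi x) z
      = chi_deriv SA posA mA levA (z - a x) + chi_deriv SB posB mB levB (z - a x + s x)"
    if "z - a x \<notin> posA ` SA" "z - a x + s x \<notin> posB ` SB" for x z
  proof -
    have "((\<lambda>w. chi SA posA mA levA w + chi SB posB mB levB (w + s x) - L) has_field_derivative
        chi_deriv SA posA mA levA (z - a x) + chi_deriv SB posB mB levB (z - a x + s x)) (at (z + - a x))"
      using DERIV_diff[OF has_field_derivative_chi_sum_shift[OF finA finB that] DERIV_const] by simp
    then have "(Phi x has_field_derivative
        chi_deriv SA posA mA levA (z - a x) + chi_deriv SB posB mB levB (z - a x + s x)) (at z)"
      unfolding DERIV_shift by (simp add: Phi[abs_def])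
    then show ?thesis
      by (rule DERIV_imp_deriv)
  qed
  have "eventually (\<lambda>x. Z x - a x \<in> \<real> \<and>
      chi_deriv SA posA mA levA (Z x - a x) + chi_deriv SB posB mB levB (Z x - a x + s x) \<in> \<real> \<and>
      sgn (Re (chi_deriv SA posA mA levA (Z x - a x) + chi_deriv SB posB mB levB (Z x - a x + s x)))
        = sgn (Re (chi_deriv SA posA mA levA \<zeta>))) F"
  proof (rule shifted_chi_sum_zero_deriv_sign[OF cfgA cfgB \<zeta>(1,2) _ _ lim s])
    show "chi_deriv SA posA mA levA \<zeta> \<noteq> 0"
      using simple deriv_chi_minus_const[OF finA \<zeta>(1)] by simp
    show "eventually (\<lambda>x.
        chi SA posA mA levA (Z x - a x) + chi SB posB mB levB (Z x - a x + s x) \<in> \<real>) F"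
      using zero by eventually_elim (use \<open>L \<in> \<real>\<close> in \<open>simp add: Phi diff_eq_eq\<close>)
  qed
  with zero show ?thesis
  proof eventually_elim
    case (elim x)
    then have "Z x \<in> \<real>"
      using Reals_add[of "Z x - a x" "a x"] a[of x] by simp
    with elim show ?case
      by (simp add: deriv_Phi deriv_chi_minus_const[OF finA \<zeta>(1)])
  qed
qed

theorem lemmaC4:
  fixes linf :: real
    and S1 :: "'s set" and cj1 :: "'s \<Rightarrow> 's" and pos1 :: "'s \<Rightarrow> complex"
    and m1 :: "'s \<Rightarrow> nat" and lev1 :: "'s \<Rightarrow> nat \<Rightarrow> complex"
    and S2 :: "'t set" and cj2 :: "'t \<Rightarrow> 't" and pos2 :: "'t \<Rightarrow> complex"
    and m2 :: "'t \<Rightarrow> nat" and lev2 :: "'t \<Rightarrow> nat \<Rightarrow> complex"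
    and phi1 phi2 :: "complex \<Rightarrow> complex"
    and phig :: "real \<Rightarrow> complex \<Rightarrow> complex"
  assumes linf: "linf \<noteq> 0"
    and cfg1: "site_config S1 cj1 pos1 m1 lev1"
    and cfg2: "site_config S2 cj2 pos2 m2 lev2"
    and phi1_def: "\<And>z. phi1 z = chi S1 pos1 m1 lev1 z - complex_of_real linf"
    and phi2_def: "\<And>z. phi2 z = chi S2 pos2 m2 lev2 z - complex_of_real linf"
    and phig_def: "\<And>g z. phig g z = chi S1 pos1 m1 lev1 z
                      + chi S2 pos2 m2 lev2 (z - complex_of_real (1 / g)) - complex_of_real linf"
    and simple1: "\<And>z. z \<notin> pos1 ` S1 \<Longrightarrow> phi1 z = 0 \<Longrightarrow> deriv phi1 z \<noteq> 0"
    and simple2: "\<And>z. z \<notin> pos2 ` S2 \<Longrightarrow> phi2 z = 0 \<Longrightarrow> deriv phi2 z \<noteq> 0"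
  shows
   "(\<forall>\<zeta>0 Z. \<zeta>0 \<notin> pos1 ` S1 \<and> phi1 \<zeta>0 = 0 \<and> \<zeta>0 \<in> \<real> \<and>
        (\<forall>\<^sub>F g in at (0::real). Z g \<notin> pos1 ` S1 \<and>
              Z g - complex_of_real (1 / g) \<notin> pos2 ` S2 \<and> phig g (Z g) = 0) \<and>
        (\<lambda>g. Z g - \<zeta>0) \<in> O[at (0::real)](\<lambda>g. complex_of_real g)
      \<longrightarrow> (\<forall>\<^sub>F g in at (0::real). Z g \<in> \<real> \<and> deriv (phig g) (Z g) \<in> \<real> \<and>
              sgn (Re (deriv (phig g) (Z g))) = sgn (Re (deriv phi1 \<zeta>0))))
    \<and>
    (\<forall>\<zeta>0 Z. \<zeta>0 \<notin> pos2 ` S2 \<and> phi2 \<zeta>0 = 0 \<and> \<zeta>0 \<in> \<real> \<and>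
        (\<forall>\<^sub>F g in at (0::real). Z g \<notin> pos1 ` S1 \<and>
              Z g - complex_of_real (1 / g) \<notin> pos2 ` S2 \<and> phig g (Z g) = 0) \<and>
        (\<lambda>g. Z g - complex_of_real (1 / g) - \<zeta>0) \<in> O[at (0::real)](\<lambda>g. complex_of_real g)
      \<longrightarrow> (\<forall>\<^sub>F g in at (0::real). Z g \<in> \<real> \<and> deriv (phig g) (Z g) \<in> \<real> \<and>
              sgn (Re (deriv (phig g) (Z g))) = sgn (Re (deriv phi2 \<zeta>0))))"
proof -
  have phi1: "phi1 = (\<lambda>z. chi S1 pos1 m1 lev1 z - complex_of_real linf)"
    and phi2: "phi2 = (\<lambda>z. chi S2 pos2 m2 lev2 z - complex_of_real linf)"
    using phi1_def phi2_def by blast+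
  have "filterlim (\<lambda>g::real. 1 / g) at_infinity (at 0)"
    using filterlim_inverse_at_infinity by (simp add: inverse_eq_divide[abs_def])
  then have shift: "filterlim (\<lambda>g::real. complex_of_real (1 / g)) at_infinity (at 0)"
    and neg_shift: "filterlim (\<lambda>g::real. - complex_of_real (1 / g)) at_infinity (at 0)"
    unfolding filterlim_at_infinity_conv_norm_at_top by (simp_all add: norm_divide)
  have "(complex_of_real \<longlongrightarrow> 0) (at 0)"
    using tendsto_of_real[OF tendsto_ident_at, of 0 UNIV] by simp
  then have tendsto: "(W \<longlongrightarrow> \<zeta>) (at 0)" if "(\<lambda>g. W g - \<zeta>) \<in> O[at 0](complex_of_real)" for W \<zeta>
    using bigo_tendsto_zero[OF that] by (simp add: LIM_zero_iff)
  show ?thesis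
    unfolding phi1 phi2
    apply (intro conjI allI impI; elim conjE)
    subgoal
      by (intro glued_zero_real_deriv_sign[OF cfg1 cfg2, where a="\<lambda>_. 0"
            and s="\<lambda>g. - complex_of_real (1 / g)"] neg_shift tendsto simple1[unfolded phi1])
        (simp_all add: phig_def)
    \<comment> \<open>in the coordinate \<open>w = z - 1/g\<close> the two configurations exchange their roles\<close>
    subgoal
      by (intro glued_zero_real_deriv_sign[OF cfg2 cfg1, where a="\<lambda>g. complex_of_real (1 / g)"
            and s="\<lambda>g. complex_of_real (1 / g)"] shift tendsto simple2[unfolded phi2])
        (auto simp: phig_def add.commute elim!: eventually_mono)
    done
qed

end
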